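(* Let $R$ be a commutative ring with identity, let $S$ be an anti-Archimedean multiplicative subset of $R$, and let $M$ be a unitary $R$-module. Let $N=\{f\in R[X]\mid c(f)=R\}$. Then the following statements are equivalent: (1) $M$ is an $S$-Noetherian $R$-module; (2) $M[X]$ is an $S$-Noetherian $R[X]$-module; (3) $M[X]_N$ is an $S$-Noetherian $R[X]_N$-module.
   Context: A multiplicative subset $S$ of $R$ is not assumed saturated. $S$ is anti-Archimedean if for every $s\in S$, $\bigcap_{n\geq 1}s^nR\cap S\neq\emptyset$. For a unitary $R$-module $M$, a submodule $L$ of $M$ is $S$-finite if there exist $s\in S$ and a finitely generated submodule $F$ of $M$ with $Ls\subseteq F\subseteq L$; $M$ is $S$-Noetherian if every submodule of $M$ is $S$-finite. For $f\in R[X]$ the content ideal $c(f)$ is the ideal of $R$ generated by the coefficients of $f$; $N$ is a regular multiplicative subset of $R[X]$, and $M[X]_N$ is the localization of the $R[X]$-module $M[X]$ at $N$. In (2) and (3), $S$ is regarded as a multiplicative subset of $R[X]$, resp. $R[X]_N$, via the natural maps. *)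

theory Defs
  imports "HOL-Computational_Algebra.Polynomial"
begin

text \<open>A module is described by a ring carrier Rc, scalar multiplication sm,
  addition ad, zero z and module carrier C.\<close>

definition is_submodule ::
  "'r set \<Rightarrow> ('r \<Rightarrow> 'm \<Rightarrow> 'm) \<Rightarrow> ('m \<Rightarrow> 'm \<Rightarrow> 'm) \<Rightarrow> 'm \<Rightarrow> 'm set \<Rightarrow> 'm set \<Rightarrow> bool" where
  "is_submodule Rc sm ad z C L \<longleftrightarrow>
     L \<subseteq> C \<and> z \<in> L \<and> (\<forall>x\<in>L. \<forall>y\<in>L. ad x y \<in> L) \<and> (\<forall>r\<in>Rc. \<forall>x\<in>L. sm r x \<in> L)"

definition gen_submodule ::
  "'r set \<Rightarrow> ('r \<Rightarrow> 'm \<Rightarrow> 'm) \<Rightarrow> ('m \<Rightarrow> 'm \<Rightarrow> 'm) \<Rightarrow> 'm \<Rightarrow> 'm set \<Rightarrow> 'm set \<Rightarrow> 'm set" where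
  "gen_submodule Rc sm ad z C G = \<Inter>{L. is_submodule Rc sm ad z C L \<and> G \<subseteq> L}"

definition fg_submodule ::
  "'r set \<Rightarrow> ('r \<Rightarrow> 'm \<Rightarrow> 'm) \<Rightarrow> ('m \<Rightarrow> 'm \<Rightarrow> 'm) \<Rightarrow> 'm \<Rightarrow> 'm set \<Rightarrow> 'm set \<Rightarrow> bool" where
  "fg_submodule Rc sm ad z C F \<longleftrightarrow>
     (\<exists>G. finite G \<and> G \<subseteq> C \<and> F = gen_submodule Rc sm ad z C G)"

definition S_finite ::
  "'r set \<Rightarrow> ('r \<Rightarrow> 'm \<Rightarrow> 'm) \<Rightarrow> ('m \<Rightarrow> 'm \<Rightarrow> 'm) \<Rightarrow> 'm \<Rightarrow> 'm set \<Rightarrow> 'r set \<Rightarrow> 'm set \<Rightarrow> bool" where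
  "S_finite Rc sm ad z C S L \<longleftrightarrow>
     (\<exists>s\<in>S. \<exists>F. fg_submodule Rc sm ad z C F \<and> sm s ` L \<subseteq> F \<and> F \<subseteq> L)"

definition S_Noetherian ::
  "'r set \<Rightarrow> ('r \<Rightarrow> 'm \<Rightarrow> 'm) \<Rightarrow> ('m \<Rightarrow> 'm \<Rightarrow> 'm) \<Rightarrow> 'm \<Rightarrow> 'm set \<Rightarrow> 'r set \<Rightarrow> bool" where
  "S_Noetherian Rc sm ad z C S \<longleftrightarrow>
     (\<forall>L. is_submodule Rc sm ad z C L \<longrightarrow> S_finite Rc sm ad z C S L)"

definition mult_subset :: "'a::comm_ring_1 set \<Rightarrow> bool" where
  "mult_subset S \<longleftrightarrow> 1 \<in> S \<and> (\<forall>s\<in>S. \<forall>t\<in>S. s * t \<in> S)"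

definition anti_Archimedean :: "'a::comm_ring_1 set \<Rightarrow> bool" where
  "anti_Archimedean S \<longleftrightarrow>
     (\<forall>s\<in>S. (\<Inter>n\<in>{n. n \<ge> 1}. {s ^ n * r | r. True}) \<inter> S \<noteq> {})"

definition pscale :: "('a::comm_ring_1 \<Rightarrow> 'b::ab_group_add \<Rightarrow> 'b) \<Rightarrow> 'a poly \<Rightarrow> 'b poly \<Rightarrow> 'b poly" where
  "pscale sc f m = (\<Sum>i\<le>degree f. \<Sum>j\<le>degree m. monom (sc (coeff f i) (coeff m j)) (i + j))"

definition content_ideal :: "'a::comm_ring_1 poly \<Rightarrow> 'a set" where
  "content_ideal f = {\<Sum>i\<le>degree f. r i * coeff f i | r. True}"

definition NN :: "'a::comm_ring_1 poly set" where
  "NN = {f. content_ideal f = UNIV}"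

definition loc_rel :: "('r::comm_ring_1 \<Rightarrow> 'm::ab_group_add \<Rightarrow> 'm) \<Rightarrow> 'r set \<Rightarrow> 'm \<times> 'r \<Rightarrow> 'm \<times> 'r \<Rightarrow> bool" where
  "loc_rel sm T p q \<longleftrightarrow> snd p \<in> T \<and> snd q \<in> T \<and>
     (\<exists>w\<in>T. sm w (sm (snd q) (fst p) - sm (snd p) (fst q)) = 0)"

definition loc_cls :: "('r::comm_ring_1 \<Rightarrow> 'm::ab_group_add \<Rightarrow> 'm) \<Rightarrow> 'r set \<Rightarrow> 'm \<Rightarrow> 'r \<Rightarrow> ('m \<times> 'r) set" where
  "loc_cls sm T m u = {q. loc_rel sm T (m, u) q}"

definition loc_carrier :: "('r::comm_ring_1 \<Rightarrow> 'm::ab_group_add \<Rightarrow> 'm) \<Rightarrow> 'r set \<Rightarrow> ('m \<times> 'r) set set" where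
  "loc_carrier sm T = {loc_cls sm T m u | m u. u \<in> T}"

definition loc_rep :: "('m \<times> 'r) set \<Rightarrow> 'm \<times> 'r" where
  "loc_rep A = (SOME p. p \<in> A)"

definition loc_add :: "('r::comm_ring_1 \<Rightarrow> 'm::ab_group_add \<Rightarrow> 'm) \<Rightarrow> 'r set \<Rightarrow>
    ('m \<times> 'r) set \<Rightarrow> ('m \<times> 'r) set \<Rightarrow> ('m \<times> 'r) set" where
  "loc_add sm T A B = (case loc_rep A of (m, u) \<Rightarrow> case loc_rep B of (m', u') \<Rightarrow>
      loc_cls sm T (sm u' m + sm u m') (u * u'))"

definition loc_zero :: "('r::comm_ring_1 \<Rightarrow> 'm::ab_group_add \<Rightarrow> 'm) \<Rightarrow> 'r set \<Rightarrow> ('m \<times> 'r) set" where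
  "loc_zero sm T = loc_cls sm T 0 1"

definition loc_act :: "('r::comm_ring_1 \<Rightarrow> 'm::ab_group_add \<Rightarrow> 'm) \<Rightarrow> 'r set \<Rightarrow>
    ('r \<times> 'r) set \<Rightarrow> ('m \<times> 'r) set \<Rightarrow> ('m \<times> 'r) set" where
  "loc_act sm T A B = (case loc_rep A of (f, u) \<Rightarrow> case loc_rep B of (m, v) \<Rightarrow>
      loc_cls sm T (sm f m) (u * v))"

end

theory Submission
  imports Defs
begin

text \<open>
  (1) \<open>\<Longrightarrow>\<close> (2) is an \<open>S\<close>-version of Hilbert's basis theorem. For an \<open>R[X]\<close>-submodule \<open>J\<close>
  of \<open>M[X]\<close> the leading coefficients of \<open>J\<close> form a submodule of \<open>M\<close>, so some \<open>s \<in> S\<close> maps it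
  into the span of finitely many of them, realised by \<open>f\<^sub>a \<in> J\<close> of one common degree \<open>d\<close>.
  Reducing \<open>p \<in> J\<close> of degree \<open>d + n\<close> against the \<open>f\<^sub>a\<close> costs a factor \<open>s\<^sup>n\<close> and lands in
  \<open>J \<inter> M[X]\<^sub>\<le>\<^sub>d\<close>, an \<open>R\<close>-submodule of \<open>M\<^sup>d\<^sup>+\<^sup>1\<close> and hence \<open>S\<close>-finite.
  The degree of \<open>p\<close> is unbounded, but as \<open>S\<close> is anti-Archimedean a single \<open>t \<in> S\<close> is
  divisible by all powers of \<open>s\<close>.

  (2) \<open>\<Longrightarrow>\<close> (1) and (3) \<open>\<Longrightarrow>\<close> (1) extend a submodule \<open>L\<close> of \<open>M\<close> to \<open>L[X]\<close>, resp. \<open>L[X]\<^sub>N\<close>,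
  and read off constant coefficients; a denominator \<open>h \<in> N\<close> is cancelled using \<open>c(h) = R\<close>.
  (2) \<open>\<Longrightarrow>\<close> (3) contracts a submodule of \<open>M[X]\<^sub>N\<close> to \<open>M[X]\<close>. That \<open>N\<close> is multiplicative
  is the content formula \<open>c(f) = c(g) = R \<Longrightarrow> c(fg) = R\<close>.
\<close>

section \<open>Submodules and \<open>S\<close>-Noetherian modules\<close>

lemma gen_submodule_superset: "G \<subseteq> gen_submodule Rc sm ad z C G"
  unfolding gen_submodule_def by blast

lemma gen_submodule_minimal:
  "is_submodule Rc sm ad z C L \<Longrightarrow> G \<subseteq> L \<Longrightarrow> gen_submodule Rc sm ad z C G \<subseteq> L"
  unfolding gen_submodule_def by blast

lemma is_submodule_gen_submodule:
  "is_submodule Rc sm ad z C C \<Longrightarrow> G \<subseteq> C \<Longrightarrow> is_submodule Rc sm ad z C (gen_submodule Rc sm ad z C G)"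
  unfolding gen_submodule_def is_submodule_def by blast

context module
begin

lemma is_submodule_UNIV_iff: "is_submodule UNIV scale (+) 0 UNIV L \<longleftrightarrow> subspace L"
  by (auto simp: is_submodule_def subspace_def)

lemma gen_submodule_UNIV: "gen_submodule UNIV scale (+) 0 UNIV G = span G"
proof (rule antisym)
  show "gen_submodule UNIV scale (+) 0 UNIV G \<subseteq> span G"
    unfolding gen_submodule_def is_submodule_UNIV_iff using span_superset by blast
  show "span G \<subseteq> gen_submodule UNIV scale (+) 0 UNIV G"
    unfolding gen_submodule_def is_submodule_UNIV_iff by (auto intro: span_minimal[THEN subsetD])
qed

lemma S_Noetherian_UNIV_iff:
  "S_Noetherian UNIV scale (+) 0 UNIV S \<longleftrightarrow>
     (\<forall>L. subspace L \<longrightarrow> (\<exists>s\<in>S. \<exists>G\<subseteq>L. finite G \<and> scale s ` L \<subseteq> span G))"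
proof -
  have finite_between: "(\<exists>F. (\<exists>G. finite G \<and> G \<subseteq> UNIV \<and> F = span G) \<and> X \<subseteq> F \<and> F \<subseteq> L)
     \<longleftrightarrow> (\<exists>G\<subseteq>L. finite G \<and> X \<subseteq> span G)" if "subspace L" for X L
  proof
    assume "\<exists>F. (\<exists>G. finite G \<and> G \<subseteq> UNIV \<and> F = span G) \<and> X \<subseteq> F \<and> F \<subseteq> L"
    then obtain G where "finite G" "X \<subseteq> span G" "span G \<subseteq> L" by blast
    with span_superset[of G] show "\<exists>G\<subseteq>L. finite G \<and> X \<subseteq> span G" by blast
  next
    assume "\<exists>G\<subseteq>L. finite G \<and> X \<subseteq> span G"
    then obtain G where "G \<subseteq> L" "finite G" "X \<subseteq> span G" by blast
    with span_minimal[OF \<open>G \<subseteq> L\<close> that]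
    show "\<exists>F. (\<exists>G. finite G \<and> G \<subseteq> UNIV \<and> F = span G) \<and> X \<subseteq> F \<and> F \<subseteq> L"
      by blast
  qed
  show ?thesis
    unfolding S_Noetherian_def S_finite_def fg_submodule_def is_submodule_UNIV_iff gen_submodule_UNIV
    by (intro iff_allI imp_cong refl bex_cong) (rule finite_between)
qed

end

lemma anti_Archimedean_dvd:
  assumes "anti_Archimedean S" "s \<in> S"
  obtains t where "t \<in> S" "\<And>n. s ^ n dvd t"
proof -
  have "(\<Inter>n\<in>{n. n \<ge> 1}. {s ^ n * r | r. True}) \<inter> S \<noteq> {}"
    using assms unfolding anti_Archimedean_def by blast
  then obtain t where t: "t \<in> (\<Inter>n\<in>{n. n \<ge> 1}. {s ^ n * r | r. True})" "t \<in> S"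
    by blast
  have "s ^ n dvd t" for n
  proof (cases "n = 0")
    case False
    then have "t \<in> {s ^ n * r | r. True}"
      using t(1) by auto
    then obtain r where "t = s ^ n * r"
      by blast
    then show ?thesis by simp
  qed simp
  with t(2) show thesis by (rule that)
qed

section \<open>The module of polynomials\<close>

lemma sum_triangle_reindex:
  fixes f :: "nat \<Rightarrow> nat \<Rightarrow> nat \<Rightarrow> 'c::comm_monoid_add"
  shows "(\<Sum>j=0..k. \<Sum>i=0..j. f i (j - i) (n - j)) = (\<Sum>j=0..k. \<Sum>i=0..k - j. f j i (n - j - i))"
  by (induct k) (simp_all add: Suc_diff_le sum.distrib add.assoc)

context module
begin

lemma coeff_pscale: "coeff (pscale scale f m) n = (\<Sum>i\<le>n. scale (coeff f i) (coeff m (n - i)))"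
proof -
  define g where "g i = scale (coeff f i) (coeff m (n - i))" for i
  have inner: "(\<Sum>j\<le>degree m. if i + j = n then scale (coeff f i) (coeff m j) else 0)
      = (if i \<le> n then g i else 0)" for i
  proof (cases "i \<le> n")
    case True
    have "(\<Sum>j\<le>degree m. if i + j = n then scale (coeff f i) (coeff m j) else 0)
       = (\<Sum>j\<le>degree m. if j = n - i then scale (coeff f i) (coeff m j) else 0)"
      using True by (intro sum.cong) auto
    also have "\<dots> = g i"
      by (cases "n - i \<le> degree m") (auto simp: g_def coeff_eq_0)
    finally show ?thesis using True by simp
  qed (auto intro!: sum.neutral)
  have "coeff (pscale scale f m) n = (\<Sum>i\<le>degree f. if i \<le> n then g i else 0)"
    unfolding pscale_def coeff_sum coeff_monom
    by (intro sum.cong refl) (simp add: inner[symmetric] eq_commute[of "_ + _" n])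
  also have "\<dots> = (\<Sum>i\<in>{i\<in>{..degree f}. i \<le> n}. g i)"
    by (subst sum.inter_filter) auto
  also have "\<dots> = (\<Sum>i\<le>n. g i)"
    by (rule sum.mono_neutral_left) (auto simp: g_def, metis coeff_eq_0 leI scale_zero_left)
  finally show ?thesis by (simp add: g_def)
qed

lemma module_pscale: "module (pscale scale)"
proof
  fix a b :: "'a poly" and x y :: "'b poly"
  show "pscale scale a (x + y) = pscale scale a x + pscale scale a y"
    by (simp add: poly_eq_iff coeff_pscale scale_right_distrib sum.distrib)
  show "pscale scale (a + b) x = pscale scale a x + pscale scale b x"
    by (simp add: poly_eq_iff coeff_pscale scale_left_distrib sum.distrib)
  have "(\<Sum>i\<le>n. scale (coeff 1 i) (coeff x (n - i))) = coeff x n" for n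
  proof -
    have "(\<Sum>i\<le>n. scale (coeff 1 i) (coeff x (n - i))) = (\<Sum>i\<le>n. if i = 0 then coeff x (n - i) else 0)"
      by (intro sum.cong) auto
    then show ?thesis by simp
  qed
  then show "pscale scale 1 x = x"
    by (simp add: poly_eq_iff coeff_pscale)
  show "pscale scale a (pscale scale b x) = pscale scale (a * b) x"
  proof (rule poly_eqI)
    fix n
    define f where "f i j l = scale (coeff a i * coeff b j) (coeff x l)" for i j l
    have "coeff (pscale scale a (pscale scale b x)) n = (\<Sum>i=0..n. \<Sum>j=0..n - i. f i j (n - i - j))"
      by (simp add: coeff_pscale scale_sum_right f_def atLeast0AtMost diff_diff_add)
    also have "\<dots> = (\<Sum>k=0..n. \<Sum>i=0..k. f i (k - i) (n - k))"
      by (rule sum_triangle_reindex[symmetric])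
    also have "\<dots> = coeff (pscale scale (a * b) x) n"
      by (simp add: coeff_pscale coeff_mult scale_sum_left f_def atLeast0AtMost)
    finally show "coeff (pscale scale a (pscale scale b x)) n = coeff (pscale scale (a * b) x) n" .
  qed
qed

lemma coeff_pscale_const [simp]: "coeff (pscale scale [:r:] p) n = scale r (coeff p n)"
  by (simp add: coeff_pscale sum.atMost_shift coeff_pCons split: nat.splits)

lemma coeff_pscale_monom:
  "coeff (pscale scale (monom c k) p) n = (if k \<le> n then scale c (coeff p (n - k)) else 0)"
  by (simp add: coeff_pscale coeff_monom if_distrib[of "\<lambda>r. scale r _"] cong: if_cong)

lemma coeff_pscale_const_right: "coeff (pscale scale f [:m:]) n = scale (coeff f n) m"
proof -
  have "(\<Sum>i\<le>n. scale (coeff f i) (coeff [:m:] (n - i))) = (\<Sum>i\<le>n. if i = n then scale (coeff f i) m else 0)"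
    by (intro sum.cong) (auto simp: coeff_pCons split: nat.splits)
  then show ?thesis by (simp add: coeff_pscale)
qed

lemma pscale_const_const: "pscale scale [:r:] [:m:] = [:scale r m:]"
  by (simp add: poly_eq_iff coeff_pCons split: nat.splits)

end

definition polys_over :: "'b::zero set \<Rightarrow> 'b poly set" where
  "polys_over K = {p. \<forall>n. coeff p n \<in> K}"

lemma const_in_polys_over_iff: "0 \<in> K \<Longrightarrow> [:m:] \<in> polys_over K \<longleftrightarrow> m \<in> K"
  by (auto simp: polys_over_def coeff_pCons split: nat.splits)

lemma (in module) finite_coeffs_span:
  assumes "finite G" "G \<subseteq> polys_over L"
  shows "\<exists>A\<subseteq>L. finite A \<and> G \<subseteq> polys_over (span A)"
proof (intro exI conjI)
  let ?A = "\<Union>g\<in>G. coeff g ` {..degree g}"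
  show "?A \<subseteq> L" "finite ?A"
    using assms by (auto simp: polys_over_def)
  have "coeff g n \<in> span ?A" if "g \<in> G" for g n
    using that by (cases "n \<le> degree g") (auto simp: coeff_eq_0 span_zero intro: span_base)
  then show "G \<subseteq> polys_over (span ?A)"
    by (auto simp: polys_over_def)
qed

definition lead_coeffs :: "'b::zero poly set \<Rightarrow> 'b set" where
  "lead_coeffs J = {coeff p n | p n. p \<in> J \<and> degree p \<le> n}"

text \<open>\<open>P\<close> is \<open>M[X]\<close> as an \<open>R[X]\<close>-module, \<open>Pc\<close> is \<open>M[X]\<close> as an \<open>R\<close>-module via constant scalars.\<close>

locale poly_module = module scale for scale :: "'a::comm_ring_1 \<Rightarrow> 'b::ab_group_add \<Rightarrow> 'b"
begin

abbreviation ps :: "'a poly \<Rightarrow> 'b poly \<Rightarrow> 'b poly" where "ps \<equiv> pscale scale"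

sublocale P: module ps
  by (rule module_pscale)

lemma pscale_const_mult: "ps [:a:] (ps [:b:] x) = ps [:a * b:] x"
  by (simp add: mult.commute)

lemma pscale_const_one [simp]: "ps [:1:] x = x"
  by (simp add: one_pCons[symmetric])

sublocale Pc: module "\<lambda>r. ps [:r:]"
  by unfold_locales
    (simp_all add: P.scale_right_distrib P.scale_left_distrib[symmetric] pscale_const_mult mult.commute)

lemma Pc_span_subset: "Pc.span B \<subseteq> P.span B"
  by (rule Pc.span_minimal[OF P.span_superset]) (auto simp: Pc.subspace_def P.span_zero P.span_add P.span_scale)

lemma subspace_polys_over: "subspace K \<Longrightarrow> P.subspace (polys_over K)"
  unfolding P.subspace_def polys_over_def
  by (auto simp: coeff_pscale subspace_0 subspace_add intro!: subspace_sum subspace_scale)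

lemma S_Noetherian_poly_imp_S_Noetherian:
  assumes "S_Noetherian UNIV ps (+) 0 UNIV ((\<lambda>s. [:s:]) ` S)"
  shows "S_Noetherian UNIV scale (+) 0 UNIV S"
  unfolding S_Noetherian_UNIV_iff
proof (intro allI impI)
  fix L assume L: "subspace L"
  obtain s G where s: "s \<in> S"
    and G: "G \<subseteq> polys_over L" "finite G" "ps [:s:] ` polys_over L \<subseteq> P.span G"
    using assms subspace_polys_over[OF L] unfolding P.S_Noetherian_UNIV_iff by blast
  obtain A where A: "A \<subseteq> L" "finite A" "G \<subseteq> polys_over (span A)"
    using finite_coeffs_span[OF G(2,1)] by blast
  have span_G: "P.span G \<subseteq> polys_over (span A)"
    using A(3) subspace_polys_over[OF subspace_span] by (rule P.span_minimal)
  have "scale s l \<in> span A" if "l \<in> L" for l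
  proof -
    have "[:l:] \<in> polys_over L"
      using that L by (simp add: const_in_polys_over_iff subspace_0)
    then have "[:scale s l:] \<in> polys_over (span A)"
      using G(3) span_G by (force simp: pscale_const_const)
    then show ?thesis
      by (simp add: const_in_polys_over_iff span_zero)
  qed
  then show "\<exists>s\<in>S. \<exists>A\<subseteq>L. finite A \<and> scale s ` L \<subseteq> span A"
    using s A(1,2) by blast
qed

lemma degree_pscale_const_le: "degree (ps [:c:] p) \<le> degree p"
  by (rule degree_le) (simp add: coeff_eq_0)

lemma coeff_pscale_shift [simp]: "coeff (ps (monom 1 m) p) (n + m) = coeff p n"
  by (simp add: coeff_pscale_monom)

lemma degree_pscale_shift_le: "degree p \<le> n \<Longrightarrow> degree (ps (monom 1 m) p) \<le> n + m"
  by (rule degree_le) (auto simp: coeff_pscale_monom coeff_eq_0)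

lemma subspace_lead_coeffs:
  assumes J: "P.subspace J"
  shows "subspace (lead_coeffs J)"
  unfolding subspace_def
proof (intro conjI ballI allI)
  show "0 \<in> lead_coeffs J"
    using P.subspace_0[OF J] unfolding lead_coeffs_def by force
next
  fix x y assume "x \<in> lead_coeffs J" "y \<in> lead_coeffs J"
  then obtain p n q m where p: "p \<in> J" "degree p \<le> n" "x = coeff p n"
    and q: "q \<in> J" "degree q \<le> m" "y = coeff q m"
    unfolding lead_coeffs_def by blast
  define r where "r = ps (monom 1 m) p + ps (monom 1 n) q"
  have r_in: "r \<in> J"
    unfolding r_def using J p q by (intro P.subspace_add P.subspace_scale) auto
  have r_degree: "degree r \<le> n + m"
    unfolding r_def using degree_pscale_shift_le[OF p(2), of m]
      degree_pscale_shift_le[OF q(2), of n, unfolded add.commute[of m n]]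
    by (intro degree_add_le)
  have r_coeff: "coeff r (n + m) = x + y"
    using p(3) q(3) coeff_pscale_shift[of n q m, unfolded add.commute[of m n]]
    by (simp add: r_def)
  show "x + y \<in> lead_coeffs J"
    unfolding lead_coeffs_def
    by (intro CollectI exI[of _ r] exI[of _ "n + m"]) (simp add: r_in r_degree r_coeff)
next
  fix c x assume "x \<in> lead_coeffs J"
  then obtain p n where p: "p \<in> J" "degree p \<le> n" "x = coeff p n"
    unfolding lead_coeffs_def by blast
  then have "ps [:c:] p \<in> J" "degree (ps [:c:] p) \<le> n" "scale c x = coeff (ps [:c:] p) n"
    using J degree_pscale_const_le[of c p] by (auto intro: P.subspace_scale)
  then show "scale c x \<in> lead_coeffs J"
    unfolding lead_coeffs_def by blast
qed

lemma lead_coeffs_common_degree: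
  assumes J: "P.subspace J" and A: "finite A" "A \<subseteq> lead_coeffs J"
  obtains d f where "\<And>a. a \<in> A \<Longrightarrow> f a \<in> J \<and> degree (f a) \<le> d \<and> coeff (f a) d = a"
proof -
  have "\<forall>a\<in>A. \<exists>p n. p \<in> J \<and> degree p \<le> n \<and> coeff p n = a"
    using A(2) unfolding lead_coeffs_def by blast
  then have "\<exists>p. \<forall>a\<in>A. \<exists>n. p a \<in> J \<and> degree (p a) \<le> n \<and> coeff (p a) n = a"
    by (rule bchoice)
  then obtain p where "\<forall>a\<in>A. \<exists>n. p a \<in> J \<and> degree (p a) \<le> n \<and> coeff (p a) n = a"
    by blast
  then have "\<exists>n. \<forall>a\<in>A. p a \<in> J \<and> degree (p a) \<le> n a \<and> coeff (p a) (n a) = a"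
    by (rule bchoice)
  then obtain n where p: "\<And>a. a \<in> A \<Longrightarrow> p a \<in> J \<and> degree (p a) \<le> n a \<and> coeff (p a) (n a) = a"
    by blast
  define d where "d = (\<Sum>a\<in>A. n a)"
  have "n a \<le> d" if "a \<in> A" for a
    unfolding d_def using A(1) that by (intro member_le_sum) auto
  with p have "ps (monom 1 (d - n a)) (p a) \<in> J \<and> degree (ps (monom 1 (d - n a)) (p a)) \<le> d
      \<and> coeff (ps (monom 1 (d - n a)) (p a)) d = a" if "a \<in> A" for a
    using that J degree_pscale_shift_le[of "p a" "n a" "d - n a"] coeff_pscale_shift[of "d - n a" "p a" "n a"]
    by (auto intro: P.subspace_scale)
  then show thesis by (rule that)
qed

lemma lead_coeffs_reduce_step:
  assumes J: "P.subspace J" and A: "finite A" "scale s ` lead_coeffs J \<subseteq> span A"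
    and f: "\<And>a. a \<in> A \<Longrightarrow> f a \<in> J \<and> degree (f a) \<le> d \<and> coeff (f a) d = a"
    and p: "p \<in> J" "degree p \<le> Suc (d + n)"
  obtains w where "w \<in> P.span (f ` A)" "ps [:s:] p - w \<in> J" "degree (ps [:s:] p - w) \<le> d + n"
proof -
  have "coeff p (Suc (d + n)) \<in> lead_coeffs J"
    using p unfolding lead_coeffs_def by blast
  then obtain u where u: "scale s (coeff p (Suc (d + n))) = (\<Sum>a\<in>A. scale (u a) a)"
    using A span_finite[OF A(1)] by blast
  define w where "w = (\<Sum>a\<in>A. ps (monom (u a) (Suc n)) (f a))"
  have "w \<in> P.span (f ` A)"
    unfolding w_def by (intro P.span_sum P.span_scale P.span_base) simp
  moreover have "ps [:s:] p - w \<in> J"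
    unfolding w_def using J p f by (intro P.subspace_diff P.subspace_sum P.subspace_scale) auto
  moreover have "degree (ps [:s:] p - w) \<le> d + n"
  proof (rule degree_le, intro allI impI)
    fix k assume k: "d + n < k"
    have "coeff (ps [:s:] p - w) k = scale s (coeff p k) - (\<Sum>a\<in>A. scale (u a) (coeff (f a) (k - Suc n)))"
      using k by (simp add: w_def coeff_sum coeff_pscale_monom)
    also have "\<dots> = 0"
    proof (cases "k = Suc (d + n)")
      case True
      then show ?thesis
        using u f by (simp add: sum.cong[OF refl, of A "\<lambda>a. scale (u a) (coeff (f a) d)"])
    next
      case False
      with k p f have "degree p < k" "\<And>a. a \<in> A \<Longrightarrow> degree (f a) < k - Suc n"
        by force+
      then show ?thesis
        by (simp add: coeff_eq_0)
    qed
    finally show "coeff (ps [:s:] p - w) k = 0" .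
  qed
  ultimately show thesis by (rule that)
qed

lemma lead_coeffs_reduce:
  assumes J: "P.subspace J" and A: "finite A" "scale s ` lead_coeffs J \<subseteq> span A"
    and f: "\<And>a. a \<in> A \<Longrightarrow> f a \<in> J \<and> degree (f a) \<le> d \<and> coeff (f a) d = a"
    and p: "p \<in> J" "degree p \<le> d + n"
  shows "\<exists>v\<in>P.span (f ` A). ps [:s ^ n:] p - v \<in> J \<and> degree (ps [:s ^ n:] p - v) \<le> d"
  using p
proof (induction n arbitrary: p)
  case 0
  then show ?case by (auto intro: bexI[of _ 0] P.span_zero)
next
  case (Suc n)
  obtain w where w: "w \<in> P.span (f ` A)" "ps [:s:] p - w \<in> J" "degree (ps [:s:] p - w) \<le> d + n"
    using lead_coeffs_reduce_step[OF J A f] Suc.prems by auto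
  obtain v where v: "v \<in> P.span (f ` A)" "ps [:s ^ n:] (ps [:s:] p - w) - v \<in> J"
    "degree (ps [:s ^ n:] (ps [:s:] p - w) - v) \<le> d"
    using Suc.IH[OF w(2,3)] by blast
  have "ps [:s ^ Suc n:] p - (v + ps [:s ^ n:] w) = ps [:s ^ n:] (ps [:s:] p - w) - v"
    by (simp add: P.scale_right_diff_distrib pscale_const_mult mult.commute)
  moreover have "v + ps [:s ^ n:] w \<in> P.span (f ` A)"
    using v(1) w(1) by (intro P.span_add P.span_scale)
  ultimately show ?case
    using v(2,3) by metis
qed

lemma module_hom_coeff: "module_hom (\<lambda>r. ps [:r:]) scale (\<lambda>p. coeff p d)"
  by unfold_locales simp_all

lemma top_coeff_reduction:
  assumes SN: "S_Noetherian UNIV scale (+) 0 UNIV S" and K: "Pc.subspace K"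
  obtains s B where "s \<in> S" "B \<subseteq> K" "finite B"
    "\<And>p. p \<in> K \<Longrightarrow> \<exists>b\<in>Pc.span B. ps [:s:] p - b \<in> K \<and> coeff (ps [:s:] p - b) d = 0"
proof -
  have "subspace ((\<lambda>p. coeff p d) ` K)"
    using K by (rule module_hom.subspace_image[OF module_hom_coeff])
  then obtain s A where s: "s \<in> S" and A: "A \<subseteq> (\<lambda>p. coeff p d) ` K" "finite A"
    "scale s ` (\<lambda>p. coeff p d) ` K \<subseteq> span A"
    using SN unfolding S_Noetherian_UNIV_iff by blast
  have "\<forall>a\<in>A. \<exists>p\<in>K. a = coeff p d"
    using A(1) by (simp add: subset_eq image_iff)
  then obtain lift where lift: "\<And>a. a \<in> A \<Longrightarrow> lift a \<in> K \<and> a = coeff (lift a) d"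
    by metis
  have "\<exists>b\<in>Pc.span (lift ` A). ps [:s:] p - b \<in> K \<and> coeff (ps [:s:] p - b) d = 0" if p: "p \<in> K" for p
  proof -
    obtain u where u: "scale s (coeff p d) = (\<Sum>a\<in>A. scale (u a) a)"
      using A(3) p span_finite[OF A(2)] by blast
    let ?b = "\<Sum>a\<in>A. ps [:u a:] (lift a)"
    have "?b \<in> Pc.span (lift ` A)"
      by (intro Pc.span_sum Pc.span_scale Pc.span_base) simp
    moreover have "(\<Sum>a\<in>A. scale (u a) (coeff (lift a) d)) = (\<Sum>a\<in>A. scale (u a) a)"
      using lift by (intro sum.cong) auto
    then have "ps [:s:] p - ?b \<in> K \<and> coeff (ps [:s:] p - ?b) d = 0"
      using K p lift u
      by (auto simp: coeff_sum intro!: Pc.subspace_diff[OF K] Pc.subspace_sum[OF K] Pc.subspace_scale[OF K])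
    ultimately show ?thesis by blast
  qed
  moreover have "lift ` A \<subseteq> K" "finite (lift ` A)"
    using lift A(2) by auto
  ultimately show thesis
    using s that by blast
qed

lemma S_finite_bounded_degree:
  assumes SN: "S_Noetherian UNIV scale (+) 0 UNIV S" and S: "mult_subset S"
    and "Pc.subspace K" "\<forall>p\<in>K. \<forall>k\<ge>d. coeff p k = 0"
  shows "\<exists>s\<in>S. \<exists>B\<subseteq>K. finite B \<and> ps [:s:] ` K \<subseteq> Pc.span B"
  using assms(3,4)
proof (induction d arbitrary: K)
  case 0
  then have "ps [:1:] ` K \<subseteq> Pc.span {}"
    by (auto simp: poly_eq_iff Pc.span_zero)
  moreover have "1 \<in> S"
    using S by (simp add: mult_subset_def)
  ultimately show ?case by blast
next
  case (Suc d)
  note K = Suc.prems(1) and K_bounded = Suc.prems(2)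
  obtain s1 B1 where s1: "s1 \<in> S" and B1: "B1 \<subseteq> K" "finite B1"
    and reduce: "\<And>p. p \<in> K \<Longrightarrow> \<exists>b\<in>Pc.span B1. ps [:s1:] p - b \<in> K \<and> coeff (ps [:s1:] p - b) d = 0"
    using top_coeff_reduction[OF SN K] by blast
  define K0 where "K0 = {p\<in>K. coeff p d = 0}"
  have "Pc.subspace K0"
    using K unfolding K0_def Pc.subspace_def by auto
  moreover have "\<forall>p\<in>K0. \<forall>k\<ge>d. coeff p k = 0"
  proof (intro ballI allI impI)
    fix p k assume "p \<in> K0" "d \<le> k"
    then show "coeff p k = 0"
      using K_bounded by (cases "k = d") (auto simp: K0_def)
  qed
  ultimately obtain s2 B0 where s2: "s2 \<in> S" and B0: "B0 \<subseteq> K0" "finite B0" "ps [:s2:] ` K0 \<subseteq> Pc.span B0"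
    using Suc.IH by blast
  have "ps [:s2 * s1:] p \<in> Pc.span (B0 \<union> B1)" if p: "p \<in> K" for p
  proof -
    obtain b where b: "b \<in> Pc.span B1" "ps [:s1:] p - b \<in> K0"
      using reduce[OF p] unfolding K0_def by blast
    then have "ps [:s2:] (ps [:s1:] p - b) \<in> Pc.span (B0 \<union> B1)"
      using B0(3) Pc.span_mono[of B0 "B0 \<union> B1"] by blast
    moreover have "ps [:s2:] b \<in> Pc.span (B0 \<union> B1)"
      using b(1) Pc.span_mono[of B1 "B0 \<union> B1"] by (blast intro: Pc.span_scale)
    moreover have "ps [:s2 * s1:] p = ps [:s2:] (ps [:s1:] p - b) + ps [:s2:] b"
      by (simp add: P.scale_right_diff_distrib pscale_const_mult mult.commute)
    ultimately show ?thesis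
      by (simp add: Pc.span_add)
  qed
  moreover have "B0 \<union> B1 \<subseteq> K" "finite (B0 \<union> B1)"
    using B0 B1 unfolding K0_def by auto
  moreover have "s2 * s1 \<in> S"
    using S s1 s2 by (simp add: mult_subset_def)
  ultimately show ?case by blast
qed

lemma subspace_degree_le: "P.subspace J \<Longrightarrow> Pc.subspace {p \<in> J. degree p \<le> d}"
  using degree_pscale_const_le unfolding Pc.subspace_def
  by (auto intro: P.subspace_0 P.subspace_add P.subspace_scale degree_add_le order_trans)

lemma S_Noetherian_imp_S_Noetherian_poly:
  assumes SN: "S_Noetherian UNIV scale (+) 0 UNIV S"
    and S: "mult_subset S" "anti_Archimedean S"
  shows "S_Noetherian UNIV ps (+) 0 UNIV ((\<lambda>s. [:s:]) ` S)"
  unfolding P.S_Noetherian_UNIV_iff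
proof (intro allI impI)
  fix J assume J: "P.subspace J"
  obtain s A where s: "s \<in> S"
    and A: "A \<subseteq> lead_coeffs J" "finite A" "scale s ` lead_coeffs J \<subseteq> span A"
    using SN subspace_lead_coeffs[OF J] unfolding S_Noetherian_UNIV_iff by blast
  obtain d f where f: "\<And>a. a \<in> A \<Longrightarrow> f a \<in> J \<and> degree (f a) \<le> d \<and> coeff (f a) d = a"
    using lead_coeffs_common_degree[OF J A(2,1)] by blast
  define K where "K = {p \<in> J. degree p \<le> d}"
  have "Pc.subspace K"
    unfolding K_def using J by (rule subspace_degree_le)
  moreover have "\<forall>p\<in>K. \<forall>k\<ge>Suc d. coeff p k = 0"
    unfolding K_def by (auto intro: coeff_eq_0)
  ultimately obtain s' B where s': "s' \<in> S" and B: "B \<subseteq> K" "finite B" "ps [:s':] ` K \<subseteq> Pc.span B"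
    using S_finite_bounded_degree[OF SN S(1)] by blast
  obtain t where t: "t \<in> S" "\<And>n. s ^ n dvd t"
    using anti_Archimedean_dvd[OF S(2) s] by blast
  have "ps [:s' * t:] p \<in> P.span (f ` A \<union> B)" if p: "p \<in> J" for p
  proof -
    obtain v where v: "v \<in> P.span (f ` A)" "ps [:s ^ degree p:] p - v \<in> K"
      using lead_coeffs_reduce[OF J A(2,3) f p, of "degree p"] unfolding K_def by auto
    obtain r where r: "t = s ^ degree p * r"
      using t(2) by (blast elim: dvdE)
    have "ps [:s':] (ps [:r:] (ps [:s ^ degree p:] p - v)) \<in> P.span (f ` A \<union> B)"
      using v(2) B(3) Pc_span_subset P.span_mono[of B "f ` A \<union> B"]
      by (blast intro: Pc.subspace_scale[OF \<open>Pc.subspace K\<close>])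
    moreover have "ps [:s' * r:] v \<in> P.span (f ` A \<union> B)"
      using v(1) P.span_mono[of "f ` A" "f ` A \<union> B"] by (blast intro: P.span_scale)
    moreover have "ps [:s' * t:] p = ps [:s' * r:] v + ps [:s':] (ps [:r:] (ps [:s ^ degree p:] p - v))"
      by (simp add: r P.scale_right_diff_distrib pscale_const_mult ac_simps)
    ultimately show ?thesis
      by (simp add: P.span_add)
  qed
  moreover have "f ` A \<union> B \<subseteq> J" "finite (f ` A \<union> B)"
    using f B A(2) unfolding K_def by auto
  moreover have "[:s' * t:] \<in> (\<lambda>s. [:s:]) ` S"
    using S(1) s' t(1) by (simp add: mult_subset_def)
  ultimately show "\<exists>s\<in>(\<lambda>s. [:s:]) ` S. \<exists>G\<subseteq>J. finite G \<and> ps s ` J \<subseteq> P.span G"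
    by blast
qed

end

section \<open>Polynomials of unit content\<close>

lemma module_mult: "module ((*) :: 'a::comm_ring_1 \<Rightarrow> 'a \<Rightarrow> 'a)"
  by unfold_locales (simp_all add: algebra_simps)

context
begin

text \<open>Ideals are the subspaces of the ring as a module over itself. The interpretation is kept
  local, and its simp rule \<open>a * (b * x) = (a * b) * x\<close> is dropped since it loops against
  \<open>mult.assoc\<close>.\<close>

interpretation ring_module: module "(*) :: 'a::comm_ring_1 \<Rightarrow> 'a \<Rightarrow> 'a"
  by (rule module_mult)

declare ring_module.scale_scale [simp del]

lemma range_coeff_pCons: "range (coeff (pCons a p)) = insert a (range (coeff p))"
proof
  show "range (coeff (pCons a p)) \<subseteq> insert a (range (coeff p))"
    by (auto simp: coeff_pCons split: nat.splits)
  have "a \<in> range (coeff (pCons a p))"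
    by (rule range_eqI[of _ _ 0]) simp
  moreover have "coeff p n \<in> range (coeff (pCons a p))" for n
    by (rule range_eqI[of _ _ "Suc n"]) simp
  ultimately show "insert a (range (coeff p)) \<subseteq> range (coeff (pCons a p))"
    by blast
qed

lemma span_insert_zero_subspace:
  assumes "ring_module.subspace I"
  shows "ring_module.span (insert 0 I) = I"
  using assms ring_module.subspace_0[OF assms] by (simp add: insert_absorb)

lemma mem_content_ideal: "(\<Sum>i\<le>degree f. r i * coeff f i) \<in> content_ideal f"
  unfolding content_ideal_def by blast

lemma coeff_in_content_ideal: "coeff f n \<in> content_ideal f"
proof (cases "n \<le> degree f")
  case True
  then have "coeff f n = (\<Sum>i\<le>degree f. (if i = n then 1 else 0) * coeff f i)"
    by (simp add: if_distrib[of "\<lambda>r. r * _"] cong: if_cong)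
  then show ?thesis
    by (simp only: mem_content_ideal)
next
  case False
  then have "coeff f n = (\<Sum>i\<le>degree f. 0 * coeff f i)"
    by (simp add: coeff_eq_0)
  then show ?thesis
    by (simp only: mem_content_ideal)
qed

lemma mem_content_idealE:
  assumes "x \<in> content_ideal f"
  obtains r where "x = (\<Sum>i\<le>degree f. r i * coeff f i)"
proof -
  have "\<exists>r. x = (\<Sum>i\<le>degree f. r i * coeff f i)"
    using assms by (simp add: content_ideal_def)
  with that show thesis by blast
qed

lemma subspace_content_ideal: "ring_module.subspace (content_ideal f)"
  unfolding ring_module.subspace_def
proof (intro conjI allI ballI impI)
  show "0 \<in> content_ideal f"
    using mem_content_ideal[of "\<lambda>_. 0" f] by simp
next
  fix c x assume "x \<in> content_ideal f"
  then obtain r where "x = (\<Sum>i\<le>degree f. r i * coeff f i)"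
    by (rule mem_content_idealE)
  then have "c * x = (\<Sum>i\<le>degree f. (c * r i) * coeff f i)"
    by (simp add: sum_distrib_left mult.assoc)
  then show "c * x \<in> content_ideal f"
    by (simp only: mem_content_ideal)
next
  fix x y assume "x \<in> content_ideal f" "y \<in> content_ideal f"
  then obtain r q where "x = (\<Sum>i\<le>degree f. r i * coeff f i)" "y = (\<Sum>i\<le>degree f. q i * coeff f i)"
    by (elim mem_content_idealE)
  then have "x + y = (\<Sum>i\<le>degree f. (r i + q i) * coeff f i)"
    by (simp add: sum.distrib distrib_right)
  then show "x + y \<in> content_ideal f"
    by (simp only: mem_content_ideal)
qed

lemma content_ideal_eq_span: "content_ideal f = ring_module.span (range (coeff f))"
proof (rule antisym)
  show "content_ideal f \<subseteq> ring_module.span (range (coeff f))"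
    unfolding content_ideal_def
    by (auto intro!: ring_module.span_sum ring_module.span_scale ring_module.span_base[OF rangeI])
  show "ring_module.span (range (coeff f)) \<subseteq> content_ideal f"
    by (rule ring_module.span_minimal) (auto simp: coeff_in_content_ideal subspace_content_ideal)
qed

lemma NN_iff_one_in_span: "f \<in> NN \<longleftrightarrow> 1 \<in> ring_module.span (range (coeff f))"
proof
  assume "1 \<in> ring_module.span (range (coeff f))"
  then have "c * 1 \<in> ring_module.span (range (coeff f))" for c
    by (rule ring_module.span_scale)
  then show "f \<in> NN"
    by (auto simp: NN_def content_ideal_eq_span)
qed (simp add: NN_def content_ideal_eq_span)

lemma range_coeff_mult_pCons_subset:
  assumes J: "ring_module.subspace J" and prod: "range (coeff (pCons a f * g)) \<subseteq> J" and a: "a \<in> J"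
  shows "range (coeff (f * g)) \<subseteq> J"
proof safe
  fix n
  have "coeff (f * g) n = coeff (pCons a f * g) (Suc n) - coeff g (Suc n) * a"
    by (simp add: mult_pCons_left mult.commute)
  moreover have "coeff (pCons a f * g) (Suc n) \<in> J"
    using prod by blast
  ultimately show "coeff (f * g) n \<in> J"
    using J a by (metis ring_module.subspace_diff ring_module.subspace_scale)
qed

lemma mem_ideal_of_comaximal_mult:
  assumes I: "ring_module.subspace I" and "1 \<in> ring_module.span (insert a I)" and ab: "a * b \<in> I"
  shows "b \<in> I"
proof -
  have "\<exists>k. 1 - k * a \<in> ring_module.span I"
    using assms(2) unfolding ring_module.span_insert by blast
  then obtain k where k: "1 - k * a \<in> I"
    using ring_module.span_eq_iff[THEN iffD2, OF I] by auto
  show ?thesis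
    using ring_module.subspace_add[OF I ring_module.subspace_scale[OF I k, of b]
        ring_module.subspace_scale[OF I ab, of k]]
    by (simp add: algebra_simps)
qed

text \<open>For \<open>I = c(fg)\<close> this says that \<open>c(f) = c(g) = R\<close> implies \<open>c(fg) = R\<close>. Shortening \<open>f\<close>
  by its constant coefficient \<open>a\<close> costs enlarging \<open>I\<close> to \<open>I + (a)\<close>; shortening \<open>g\<close> is free
  once the constant coefficient \<open>b\<close> of \<open>g\<close> is known to lie in \<open>I\<close>.\<close>

lemma one_in_ideal_of_comaximal_contents:
  assumes "ring_module.subspace I"
    and "1 \<in> ring_module.span (I \<union> range (coeff f))"
    and "1 \<in> ring_module.span (I \<union> range (coeff g))"
    and "range (coeff (f * g)) \<subseteq> I"
  shows "1 \<in> I"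
  using assms
proof (induction f arbitrary: I g)
  case 0
  then show ?case by (simp add: span_insert_zero_subspace)
next
  case (pCons a f)
  note IH_f = pCons.IH
  show ?case
    using pCons.prems
  proof (induction g arbitrary: I)
    case 0
    then show ?case by (simp add: span_insert_zero_subspace)
  next
    case (pCons b g)
    note I = pCons.prems(1) and prod = pCons.prems(4)
    define J where "J = ring_module.span (insert a I)"
    have J: "ring_module.subspace J" "I \<subseteq> J" "a \<in> J"
      unfolding J_def using ring_module.span_superset[of "insert a I"] by auto
    have "I \<union> range (coeff (pCons a f)) \<subseteq> J \<union> range (coeff f)"
      using J(2,3) by (auto simp: range_coeff_pCons)
    then have "1 \<in> ring_module.span (J \<union> range (coeff f))"
      using pCons.prems(2) ring_module.span_mono by blast
    moreover have "1 \<in> ring_module.span (J \<union> range (coeff (pCons b g)))"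
      using pCons.prems(3) ring_module.span_mono[of "I \<union> _" "J \<union> _"] J(2) by blast
    moreover have "range (coeff (f * pCons b g)) \<subseteq> J"
      using J(1) _ J(3) by (rule range_coeff_mult_pCons_subset) (use prod J(2) in blast)
    ultimately have "1 \<in> J"
      using IH_f[OF J(1)] by blast
    moreover have "a * b \<in> I"
      using prod by (metis coeff_mult_0 coeff_pCons_0 rangeI subsetD)
    ultimately have b: "b \<in> I"
      unfolding J_def using I by (blast intro: mem_ideal_of_comaximal_mult)
    have "I \<union> range (coeff (pCons b g)) \<subseteq> I \<union> range (coeff g)"
      using b by (auto simp: range_coeff_pCons)
    then have "1 \<in> ring_module.span (I \<union> range (coeff g))"
      using pCons.prems(3) ring_module.span_mono by blast
    moreover have "range (coeff (g * pCons a f)) \<subseteq> I"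
      using I _ b by (rule range_coeff_mult_pCons_subset) (use prod in \<open>simp add: mult.commute\<close>)
    ultimately show "1 \<in> I"
      using pCons.IH[OF I pCons.prems(2)] by (simp add: mult.commute)
  qed
qed

lemma NN_mult:
  assumes "f \<in> NN" "g \<in> NN"
  shows "f * g \<in> NN"
proof -
  let ?I = "ring_module.span (range (coeff (f * g)))"
  have span_le: "ring_module.span (range (coeff h)) \<subseteq> ring_module.span (?I \<union> range (coeff h))" for h
    by (rule ring_module.span_mono) blast
  have "1 \<in> ring_module.span (?I \<union> range (coeff f))"
    using assms(1) unfolding NN_iff_one_in_span by (rule subsetD[OF span_le])
  moreover have "1 \<in> ring_module.span (?I \<union> range (coeff g))"
    using assms(2) unfolding NN_iff_one_in_span by (rule subsetD[OF span_le])
  ultimately have "1 \<in> ?I"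
    using one_in_ideal_of_comaximal_contents[OF ring_module.subspace_span _ _ ring_module.span_superset]
    by blast
  then show ?thesis
    by (simp add: NN_iff_one_in_span)
qed

lemma mult_subset_NN: "mult_subset NN"
proof -
  have "1 \<in> range (coeff (1 :: 'a poly))"
    by (rule range_eqI[of _ _ 0]) simp
  then have "1 \<in> (NN :: 'a poly set)"
    unfolding NN_iff_one_in_span by (rule ring_module.span_base)
  then show ?thesis
    unfolding mult_subset_def using NN_mult by blast
qed

end

section \<open>Localization of a module\<close>

locale module_localization = module sm for sm :: "'r::comm_ring_1 \<Rightarrow> 'm::ab_group_add \<Rightarrow> 'm" +
  fixes T :: "'r set"
  assumes mult_subset_T: "mult_subset T"
begin

lemma one_in_T: "1 \<in> T"
  and mult_in_T: "u \<in> T \<Longrightarrow> v \<in> T \<Longrightarrow> u * v \<in> T"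
  using mult_subset_T by (auto simp: mult_subset_def)

lemma localization_ring: "module_localization (*) T"
  by (simp add: module_localization_def module_localization_axioms_def module_mult mult_subset_T)

lemma loc_rel_iff:
  "loc_rel sm T (m, u) (m', u') \<longleftrightarrow> u \<in> T \<and> u' \<in> T \<and> (\<exists>w\<in>T. sm (w * u') m = sm (w * u) m')"
  unfolding loc_rel_def by (simp add: scale_right_diff_distrib)

lemma loc_rel_refl: "u \<in> T \<Longrightarrow> loc_rel sm T (m, u) (m, u)"
  unfolding loc_rel_iff using one_in_T by blast

lemma loc_rel_sym:
  assumes "loc_rel sm T p q"
  shows "loc_rel sm T q p"
proof (cases p; cases q)
  fix m u m' u' assume pq: "p = (m, u)" "q = (m', u')"
  with assms obtain w where "u \<in> T" "u' \<in> T" "w \<in> T" "sm (w * u') m = sm (w * u) m'"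
    by (auto simp: loc_rel_iff)
  then show ?thesis
    unfolding pq loc_rel_iff by (auto intro!: bexI[of _ w])
qed

lemma loc_rel_trans:
  assumes "loc_rel sm T p q" "loc_rel sm T q r"
  shows "loc_rel sm T p r"
proof (cases p; cases q; cases r)
  fix m u m' u' m'' u''
  assume pqr: "p = (m, u)" "q = (m', u')" "r = (m'', u'')"
  obtain w1 w2 where T: "u \<in> T" "u' \<in> T" "u'' \<in> T" "w1 \<in> T" "w2 \<in> T"
    and e1: "sm (w1 * u') m = sm (w1 * u) m'" and e2: "sm (w2 * u'') m' = sm (w2 * u') m''"
    using assms unfolding pqr loc_rel_iff by blast
  have "sm ((w1 * w2 * u') * u'') m = sm (w2 * u'') (sm (w1 * u') m)" by (simp add: ac_simps)
  also have "\<dots> = sm (w2 * u'') (sm (w1 * u) m')" by (simp only: e1)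
  also have "\<dots> = sm (w1 * u) (sm (w2 * u'') m')" by (simp add: ac_simps)
  also have "\<dots> = sm (w1 * u) (sm (w2 * u') m'')" by (simp only: e2)
  also have "\<dots> = sm ((w1 * w2 * u') * u) m''" by (simp add: ac_simps)
  finally have "sm ((w1 * w2 * u') * u'') m = sm ((w1 * w2 * u') * u) m''" .
  moreover have "w1 * w2 * u' \<in> T"
    using T mult_in_T by blast
  ultimately show "loc_rel sm T p r"
    unfolding pqr loc_rel_iff using T by blast
qed

lemma mem_loc_cls: "q \<in> loc_cls sm T m u \<longleftrightarrow> loc_rel sm T (m, u) q"
  by (simp add: loc_cls_def)

lemma loc_cls_eq_iff:
  assumes "u \<in> T" "u' \<in> T"
  shows "loc_cls sm T m u = loc_cls sm T m' u' \<longleftrightarrow> loc_rel sm T (m, u) (m', u')"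
proof
  assume "loc_cls sm T m u = loc_cls sm T m' u'"
  then have "(m', u') \<in> loc_cls sm T m u"
    using loc_rel_refl[OF assms(2)] by (simp add: mem_loc_cls)
  then show "loc_rel sm T (m, u) (m', u')"
    by (simp add: mem_loc_cls)
next
  assume "loc_rel sm T (m, u) (m', u')"
  then show "loc_cls sm T m u = loc_cls sm T m' u'"
    unfolding loc_cls_def using loc_rel_sym loc_rel_trans by blast
qed

lemma loc_cls_cancel:
  assumes "u \<in> T" "v \<in> T"
  shows "loc_cls sm T (sm u m) (u * v) = loc_cls sm T m v"
  using assms mult_in_T one_in_T by (subst loc_cls_eq_iff) (auto simp: loc_rel_iff ac_simps)

lemma loc_cls_in_carrier: "u \<in> T \<Longrightarrow> loc_cls sm T m u \<in> loc_carrier sm T"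
  unfolding loc_carrier_def by blast

lemma loc_carrier_cases:
  assumes "A \<in> loc_carrier sm T"
  obtains m u where "u \<in> T" "A = loc_cls sm T m u"
  using assms unfolding loc_carrier_def by blast

lemma loc_rep_cls:
  assumes "u \<in> T"
  obtains m' u' w where "loc_rep (loc_cls sm T m u) = (m', u')" "u' \<in> T" "w \<in> T"
    "sm (w * u') m = sm (w * u) m'"
proof -
  have "(m, u) \<in> loc_cls sm T m u"
    using loc_rel_refl[OF assms] by (simp add: mem_loc_cls)
  then have "loc_rep (loc_cls sm T m u) \<in> loc_cls sm T m u"
    unfolding loc_rep_def by (rule someI)
  then show thesis
    using that by (cases "loc_rep (loc_cls sm T m u)") (auto simp: mem_loc_cls loc_rel_iff)
qed

lemma loc_add_cls:
  assumes u: "u \<in> T" and v: "v \<in> T"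
  shows "loc_add sm T (loc_cls sm T m u) (loc_cls sm T n v) = loc_cls sm T (sm v m + sm u n) (u * v)"
proof -
  obtain m1 u1 w1 where r1: "loc_rep (loc_cls sm T m u) = (m1, u1)" "u1 \<in> T" "w1 \<in> T"
    and e1: "sm (w1 * u1) m = sm (w1 * u) m1"
    using u by (rule loc_rep_cls)
  obtain n1 v1 w2 where r2: "loc_rep (loc_cls sm T n v) = (n1, v1)" "v1 \<in> T" "w2 \<in> T"
    and e2: "sm (w2 * v1) n = sm (w2 * v) n1"
    using v by (rule loc_rep_cls)
  have "sm (w1 * w2 * (u1 * v1)) (sm v m) = sm (w2 * v1 * v) (sm (w1 * u1) m)" by (simp add: ac_simps)
  also have "\<dots> = sm (w2 * v1 * v) (sm (w1 * u) m1)" by (simp only: e1)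
  also have "\<dots> = sm (w1 * w2 * (u * v)) (sm v1 m1)" by (simp add: ac_simps)
  finally have a1: "sm (w1 * w2 * (u1 * v1)) (sm v m) = sm (w1 * w2 * (u * v)) (sm v1 m1)" .
  have "sm (w1 * w2 * (u1 * v1)) (sm u n) = sm (w1 * u1 * u) (sm (w2 * v1) n)" by (simp add: ac_simps)
  also have "\<dots> = sm (w1 * u1 * u) (sm (w2 * v) n1)" by (simp only: e2)
  also have "\<dots> = sm (w1 * w2 * (u * v)) (sm u1 n1)" by (simp add: ac_simps)
  finally have a2: "sm (w1 * w2 * (u1 * v1)) (sm u n) = sm (w1 * w2 * (u * v)) (sm u1 n1)" .
  have "loc_rel sm T (sm v1 m1 + sm u1 n1, u1 * v1) (sm v m + sm u n, u * v)"
    unfolding loc_rel_iff using a1 a2 r1 r2 u v mult_in_T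
    by (intro conjI bexI[of _ "w1 * w2"]) (auto simp: scale_right_distrib)
  then have "loc_cls sm T (sm v1 m1 + sm u1 n1) (u1 * v1) = loc_cls sm T (sm v m + sm u n) (u * v)"
    using loc_cls_eq_iff r1 r2 u v mult_in_T by blast
  then show ?thesis
    unfolding loc_add_def r1(1) r2(1) by simp
qed

lemma loc_act_cls:
  assumes u: "u \<in> T" and v: "v \<in> T"
  shows "loc_act sm T (loc_cls (*) T f u) (loc_cls sm T m v) = loc_cls sm T (sm f m) (u * v)"
proof -
  obtain f1 u1 w1 where r1: "loc_rep (loc_cls (*) T f u) = (f1, u1)" "u1 \<in> T" "w1 \<in> T"
    and e1: "(w1 * u1) * f = (w1 * u) * f1"
    using u by (rule module_localization.loc_rep_cls[OF localization_ring])
  obtain m1 v1 w2 where r2: "loc_rep (loc_cls sm T m v) = (m1, v1)" "v1 \<in> T" "w2 \<in> T"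
    and e2: "sm (w2 * v1) m = sm (w2 * v) m1"
    using v by (rule loc_rep_cls)
  have "sm (w1 * w2 * (u1 * v1)) (sm f m) = sm ((w1 * u1 * f) * w2 * v1) m"
    by (simp add: ac_simps)
  also have "\<dots> = sm ((w1 * u * f1) * w2 * v1) m" by (simp only: e1)
  also have "\<dots> = sm (w1 * u * f1) (sm (w2 * v1) m)" by (simp add: ac_simps)
  also have "\<dots> = sm (w1 * u * f1) (sm (w2 * v) m1)" by (simp only: e2)
  also have "\<dots> = sm (w1 * w2 * (u * v)) (sm f1 m1)" by (simp add: ac_simps)
  finally have "loc_rel sm T (sm f1 m1, u1 * v1) (sm f m, u * v)"
    unfolding loc_rel_iff using r1 r2 u v mult_in_T by (intro conjI bexI[of _ "w1 * w2"]) auto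
  then have "loc_cls sm T (sm f1 m1) (u1 * v1) = loc_cls sm T (sm f m) (u * v)"
    using loc_cls_eq_iff r1 r2 u v mult_in_T by blast
  then show ?thesis
    unfolding loc_act_def r1(1) r2(1) by simp
qed

lemma loc_act_const_cls:
  assumes "u \<in> T"
  shows "loc_act sm T (loc_cls (*) T c 1) (loc_cls sm T m u)
    = loc_act sm T (loc_cls (*) T 1 u) (loc_cls sm T (sm c m) 1)"
  using assms one_in_T by (simp add: loc_act_cls)

lemma loc_carrier_submodule:
  "is_submodule (loc_carrier (*) T) (loc_act sm T) (loc_add sm T) (loc_zero sm T) (loc_carrier sm T)
     (loc_carrier sm T)"
  unfolding is_submodule_def
proof (intro conjI ballI subset_refl)
  show "loc_zero sm T \<in> loc_carrier sm T"
    unfolding loc_zero_def using one_in_T by (rule loc_cls_in_carrier)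
next
  fix x y assume "x \<in> loc_carrier sm T" "y \<in> loc_carrier sm T"
  then obtain m u n v where "u \<in> T" "x = loc_cls sm T m u" "v \<in> T" "y = loc_cls sm T n v"
    by (metis loc_carrier_cases)
  then show "loc_add sm T x y \<in> loc_carrier sm T"
    by (simp add: loc_add_cls loc_cls_in_carrier mult_in_T)
next
  fix r x assume "r \<in> loc_carrier (*) T" "x \<in> loc_carrier sm T"
  then obtain f u n v where "u \<in> T" "r = loc_cls (*) T f u" "v \<in> T" "x = loc_cls sm T n v"
    by (metis loc_carrier_cases module_localization.loc_carrier_cases[OF localization_ring])
  then show "loc_act sm T r x \<in> loc_carrier sm T"
    by (simp add: loc_act_cls loc_cls_in_carrier mult_in_T)
qed

end

section \<open>Localization of \<open>M[X]\<close> at the polynomials of unit content\<close>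

sublocale poly_module \<subseteq> L: module_localization ps NN
  by (rule module_localization.intro[OF module_pscale])
    (simp add: module_localization_axioms_def mult_subset_NN)

context poly_module
begin

abbreviation loc_submodule :: "('b poly \<times> 'a poly) set set \<Rightarrow> bool" where
  "loc_submodule L \<equiv> is_submodule (loc_carrier (*) NN) (loc_act ps NN) (loc_add ps NN) (loc_zero ps NN)
     (loc_carrier ps NN) L"

abbreviation loc_gen :: "('b poly \<times> 'a poly) set set \<Rightarrow> ('b poly \<times> 'a poly) set set" where
  "loc_gen G \<equiv> gen_submodule (loc_carrier (*) NN) (loc_act ps NN) (loc_add ps NN) (loc_zero ps NN)
     (loc_carrier ps NN) G"

lemma loc_submodule_act:
  "loc_submodule L \<Longrightarrow> u \<in> NN \<Longrightarrow> x \<in> L \<Longrightarrow> loc_act ps NN (loc_cls (*) NN f u) x \<in> L"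
  unfolding is_submodule_def loc_carrier_def by blast

lemma subspace_contraction:
  assumes L: "loc_submodule L"
  shows "P.subspace {m. loc_cls ps NN m 1 \<in> L}"
proof (rule P.subspaceI, unfold mem_Collect_eq)
  show "loc_cls ps NN 0 1 \<in> L"
    using L by (simp add: is_submodule_def loc_zero_def)
next
  fix x y assume "loc_cls ps NN x 1 \<in> L" "loc_cls ps NN y 1 \<in> L"
  then have "loc_add ps NN (loc_cls ps NN x 1) (loc_cls ps NN y 1) \<in> L"
    using L by (simp add: is_submodule_def)
  then show "loc_cls ps NN (x + y) 1 \<in> L"
    by (simp add: L.loc_add_cls L.one_in_T)
next
  fix c x assume "loc_cls ps NN x 1 \<in> L"
  then have "loc_act ps NN (loc_cls (*) NN c 1) (loc_cls ps NN x 1) \<in> L"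
    using L L.one_in_T by (rule loc_submodule_act[rotated 2])
  then show "loc_cls ps NN (ps c x) 1 \<in> L"
    by (simp add: L.loc_act_cls L.one_in_T)
qed

lemma loc_cls_one_in_submodule:
  assumes L: "loc_submodule L" and u: "u \<in> NN" and m: "loc_cls ps NN m u \<in> L"
  shows "loc_cls ps NN m 1 \<in> L"
proof -
  have "loc_act ps NN (loc_cls (*) NN u 1) (loc_cls ps NN m u) \<in> L"
    using L L.one_in_T m by (rule loc_submodule_act)
  moreover have "loc_act ps NN (loc_cls (*) NN u 1) (loc_cls ps NN m u) = loc_cls ps NN m 1"
    using L.loc_act_cls[OF L.one_in_T u] L.loc_cls_cancel[OF u L.one_in_T] by simp
  ultimately show ?thesis by simp
qed

lemma span_subset_contraction_loc_gen:
  "P.span G \<subseteq> {m. loc_cls ps NN m 1 \<in> loc_gen ((\<lambda>g. loc_cls ps NN g 1) ` G)}"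
proof (rule P.span_minimal)
  let ?G = "(\<lambda>g. loc_cls ps NN g 1) ` G"
  have "?G \<subseteq> loc_carrier ps NN"
    by (auto intro: L.loc_cls_in_carrier[OF L.one_in_T])
  with L.loc_carrier_submodule show "P.subspace {m. loc_cls ps NN m 1 \<in> loc_gen ?G}"
    by (intro subspace_contraction is_submodule_gen_submodule)
  have "?G \<subseteq> loc_gen ?G"
    by (rule gen_submodule_superset)
  then show "G \<subseteq> {m. loc_cls ps NN m 1 \<in> loc_gen ?G}"
    by auto
qed

lemma S_Noetherian_poly_imp_S_Noetherian_loc:
  assumes "S_Noetherian UNIV ps (+) 0 UNIV ((\<lambda>s. [:s:]) ` S)"
  shows "S_Noetherian (loc_carrier (*) NN) (loc_act ps NN) (loc_add ps NN) (loc_zero ps NN)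
           (loc_carrier ps NN) ((\<lambda>s. loc_cls (*) NN [:s:] 1) ` S)"
  unfolding S_Noetherian_def S_finite_def
proof (intro allI impI)
  fix L assume L: "loc_submodule L"
  define C where "C = {m. loc_cls ps NN m 1 \<in> L}"
  have "P.subspace C"
    unfolding C_def using L by (rule subspace_contraction)
  then obtain s G where s: "s \<in> S" and G: "G \<subseteq> C" "finite G" "ps [:s:] ` C \<subseteq> P.span G"
    using assms unfolding P.S_Noetherian_UNIV_iff by blast
  define F where "F = loc_gen ((\<lambda>g. loc_cls ps NN g 1) ` G)"
  have G_carrier: "(\<lambda>g. loc_cls ps NN g 1) ` G \<subseteq> loc_carrier ps NN"
    by (auto intro: L.loc_cls_in_carrier[OF L.one_in_T])
  then have F: "loc_submodule F"
    unfolding F_def using L.loc_carrier_submodule by (intro is_submodule_gen_submodule)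
  have "(\<lambda>g. loc_cls ps NN g 1) ` G \<subseteq> L"
    using G(1) by (auto simp: C_def)
  with L have "F \<subseteq> L"
    unfolding F_def by (rule gen_submodule_minimal)
  have "loc_act ps NN (loc_cls (*) NN [:s:] 1) x \<in> F" if x: "x \<in> L" for x
  proof -
    have "x \<in> loc_carrier ps NN"
      using x L unfolding is_submodule_def by blast
    then obtain m u where u: "u \<in> NN" and x_eq: "x = loc_cls ps NN m u"
      by (rule L.loc_carrier_cases)
    have "m \<in> C"
      using loc_cls_one_in_submodule[OF L u] x unfolding x_eq C_def by simp
    then have "loc_cls ps NN (ps [:s:] m) 1 \<in> F"
      using G(3) span_subset_contraction_loc_gen unfolding F_def by blast
    with F u show ?thesis
      unfolding x_eq L.loc_act_const_cls[OF u] by (rule loc_submodule_act)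
  qed
  then have "loc_act ps NN (loc_cls (*) NN [:s:] 1) ` L \<subseteq> F"
    by (simp add: image_subset_iff)
  moreover have "fg_submodule (loc_carrier (*) NN) (loc_act ps NN) (loc_add ps NN) (loc_zero ps NN)
      (loc_carrier ps NN) F"
    unfolding fg_submodule_def F_def using G(2) G_carrier by blast
  moreover have "loc_cls (*) NN [:s:] 1 \<in> (\<lambda>s. loc_cls (*) NN [:s:] 1) ` S"
    using s by (rule imageI)
  ultimately show "\<exists>s\<in>(\<lambda>s. loc_cls (*) NN [:s:] 1) ` S. \<exists>F. fg_submodule (loc_carrier (*) NN)
      (loc_act ps NN) (loc_add ps NN) (loc_zero ps NN) (loc_carrier ps NN) F
      \<and> loc_act ps NN s ` L \<subseteq> F \<and> F \<subseteq> L"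
    using \<open>F \<subseteq> L\<close> by blast
qed

definition loc_polys_over :: "'b set \<Rightarrow> ('b poly \<times> 'a poly) set set" where
  "loc_polys_over K = {loc_cls ps NN q u | q u. u \<in> NN \<and> q \<in> polys_over K}"

lemma loc_submodule_loc_polys_over:
  assumes K: "subspace K"
  shows "loc_submodule (loc_polys_over K)"
  unfolding is_submodule_def
proof (intro conjI ballI subsetI)
  fix x assume "x \<in> loc_polys_over K"
  then show "x \<in> loc_carrier ps NN"
    unfolding loc_polys_over_def using L.loc_cls_in_carrier by blast
next
  show "loc_zero ps NN \<in> loc_polys_over K"
    unfolding loc_polys_over_def loc_zero_def using L.one_in_T P.subspace_0[OF subspace_polys_over[OF K]]
    by blast
next
  fix x y assume "x \<in> loc_polys_over K" "y \<in> loc_polys_over K"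
  then obtain q u q' u' where "u \<in> NN" "x = loc_cls ps NN q u" "q \<in> polys_over K"
    "u' \<in> NN" "y = loc_cls ps NN q' u'" "q' \<in> polys_over K"
    unfolding loc_polys_over_def by blast
  moreover from this have "ps u' q + ps u q' \<in> polys_over K"
    using subspace_polys_over[OF K] by (intro P.subspace_add P.subspace_scale)
  moreover from calculation have "loc_add ps NN x y = loc_cls ps NN (ps u' q + ps u q') (u * u')"
    by (simp add: L.loc_add_cls)
  ultimately show "loc_add ps NN x y \<in> loc_polys_over K"
    unfolding loc_polys_over_def using L.mult_in_T by blast
next
  fix r :: "('a poly \<times> 'a poly) set" and x
  assume "r \<in> loc_carrier (*) NN" "x \<in> loc_polys_over K"
  then obtain f v q u where "v \<in> NN" "r = loc_cls (*) NN f v" "u \<in> NN" "x = loc_cls ps NN q u"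
    "q \<in> polys_over K"
    unfolding loc_polys_over_def loc_carrier_def by blast
  moreover from this have "ps f q \<in> polys_over K"
    using subspace_polys_over[OF K] by (intro P.subspace_scale)
  moreover from calculation have "loc_act ps NN r x = loc_cls ps NN (ps f q) (v * u)"
    by (simp add: L.loc_act_cls)
  ultimately show "loc_act ps NN r x \<in> loc_polys_over K"
    unfolding loc_polys_over_def using L.mult_in_T by blast
qed

lemma const_in_loc_polys_over:
  assumes K: "subspace K" and m: "loc_cls ps NN [:m:] 1 \<in> loc_polys_over K"
  shows "m \<in> K"
proof -
  obtain q u where u: "u \<in> NN" and q: "q \<in> polys_over K" and eq: "loc_cls ps NN [:m:] 1 = loc_cls ps NN q u"
    using m unfolding loc_polys_over_def by blast
  obtain w where w: "w \<in> NN" "ps (w * u) [:m:] = ps (w * 1) q"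
    using eq unfolding L.loc_cls_eq_iff[OF L.one_in_T u] L.loc_rel_iff by auto
  define h where "h = w * u"
  have "h \<in> NN"
    unfolding h_def using w(1) u by (rule L.mult_in_T)
  have "ps h [:m:] \<in> polys_over K"
    unfolding h_def w(2) using subspace_polys_over[OF K] q by (rule P.subspace_scale)
  then have h_coeff: "scale (coeff h i) m \<in> K" for i
    by (simp add: polys_over_def coeff_pscale_const_right)
  have "1 \<in> content_ideal h"
    using \<open>h \<in> NN\<close> by (simp add: NN_def)
  then obtain r where r: "1 = (\<Sum>i\<le>degree h. r i * coeff h i)"
    by (rule mem_content_idealE)
  have "m = scale (\<Sum>i\<le>degree h. r i * coeff h i) m"
    by (simp flip: r)
  also have "\<dots> = (\<Sum>i\<le>degree h. scale (r i) (scale (coeff h i) m))"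
    by (simp add: scale_sum_left)
  also have "\<dots> \<in> K"
    by (rule subspace_sum[OF K], rule subspace_scale[OF K h_coeff])
  finally show "m \<in> K" .
qed

lemma finite_loc_polys_over_span:
  assumes G: "finite G" "G \<subseteq> loc_polys_over L"
  shows "\<exists>A\<subseteq>L. finite A \<and> G \<subseteq> loc_polys_over (span A)"
proof -
  have "\<forall>g\<in>G. \<exists>q. q \<in> polys_over L \<and> (\<exists>u. u \<in> NN \<and> g = loc_cls ps NN q u)"
    using G(2) unfolding loc_polys_over_def by blast
  then have "\<exists>q. \<forall>g\<in>G. q g \<in> polys_over L \<and> (\<exists>u. u \<in> NN \<and> g = loc_cls ps NN (q g) u)"
    by (rule bchoice)
  then obtain q where q: "\<And>g. g \<in> G \<Longrightarrow> q g \<in> polys_over L \<and> (\<exists>u. u \<in> NN \<and> g = loc_cls ps NN (q g) u)"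
    by blast
  obtain A where A: "A \<subseteq> L" "finite A" "q ` G \<subseteq> polys_over (span A)"
    using finite_coeffs_span[of "q ` G" L] G(1) q by blast
  have "G \<subseteq> loc_polys_over (span A)"
    using q A(3) unfolding loc_polys_over_def by blast
  with A(1,2) show ?thesis by blast
qed

lemma fg_submodule_loc_polys_over_span:
  assumes "fg_submodule (loc_carrier (*) NN) (loc_act ps NN) (loc_add ps NN) (loc_zero ps NN)
      (loc_carrier ps NN) F"
    and "F \<subseteq> loc_polys_over L"
  shows "\<exists>A\<subseteq>L. finite A \<and> F \<subseteq> loc_polys_over (span A)"
proof -
  obtain G where G: "finite G" "F = loc_gen G"
    using assms(1) unfolding fg_submodule_def by blast
  have "G \<subseteq> F"
    unfolding G(2) by (rule gen_submodule_superset)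
  then have G_L: "G \<subseteq> loc_polys_over L"
    using assms(2) by (rule order_trans)
  obtain A where A: "A \<subseteq> L" "finite A" "G \<subseteq> loc_polys_over (span A)"
    using finite_loc_polys_over_span[OF G(1) G_L] by blast
  have "F \<subseteq> loc_polys_over (span A)"
    unfolding G(2) using loc_submodule_loc_polys_over[OF subspace_span] A(3)
    by (rule gen_submodule_minimal)
  with A(1,2) show ?thesis by blast
qed

lemma const_cls_in_loc_polys_over: "subspace L \<Longrightarrow> l \<in> L \<Longrightarrow> loc_cls ps NN [:l:] 1 \<in> loc_polys_over L"
  unfolding loc_polys_over_def using L.one_in_T
  by (blast intro: const_in_polys_over_iff[THEN iffD2] subspace_0)

lemma S_Noetherian_loc_imp_S_Noetherian:
  assumes "S_Noetherian (loc_carrier (*) NN) (loc_act ps NN) (loc_add ps NN) (loc_zero ps NN)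
             (loc_carrier ps NN) ((\<lambda>s. loc_cls (*) NN [:s:] 1) ` S)"
  shows "S_Noetherian UNIV scale (+) 0 UNIV S"
  unfolding S_Noetherian_UNIV_iff
proof (intro allI impI)
  fix L assume L: "subspace L"
  have "S_finite (loc_carrier (*) NN) (loc_act ps NN) (loc_add ps NN) (loc_zero ps NN) (loc_carrier ps NN)
      ((\<lambda>s. loc_cls (*) NN [:s:] 1) ` S) (loc_polys_over L)"
    using assms loc_submodule_loc_polys_over[OF L] unfolding S_Noetherian_def by blast
  then obtain s F where s: "s \<in> S"
    and F: "fg_submodule (loc_carrier (*) NN) (loc_act ps NN) (loc_add ps NN) (loc_zero ps NN)
              (loc_carrier ps NN) F"
      "loc_act ps NN (loc_cls (*) NN [:s:] 1) ` loc_polys_over L \<subseteq> F" "F \<subseteq> loc_polys_over L"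
    unfolding S_finite_def by blast
  obtain A where A: "A \<subseteq> L" "finite A" "F \<subseteq> loc_polys_over (span A)"
    using fg_submodule_loc_polys_over_span[OF F(1,3)] by blast
  have "scale s l \<in> span A" if "l \<in> L" for l
  proof -
    have "loc_act ps NN (loc_cls (*) NN [:s:] 1) (loc_cls ps NN [:l:] 1) \<in> loc_polys_over (span A)"
      using const_cls_in_loc_polys_over[OF L that] F(2) A(3) by blast
    then have "loc_cls ps NN [:scale s l:] 1 \<in> loc_polys_over (span A)"
      by (simp add: L.loc_act_cls L.one_in_T pscale_const_const)
    then show ?thesis
      by (rule const_in_loc_polys_over[OF subspace_span])
  qed
  then show "\<exists>s\<in>S. \<exists>A\<subseteq>L. finite A \<and> scale s ` L \<subseteq> span A"
    using s A(1,2) by blast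
qed

end

theorem theorem2p6:
  fixes scale :: "'a::comm_ring_1 \<Rightarrow> 'b::ab_group_add \<Rightarrow> 'b"
    and S :: "'a set"
  assumes "module scale"
    and "mult_subset S"
    and "anti_Archimedean S"
  shows
   "(S_Noetherian UNIV scale (+) 0 UNIV S
       \<longleftrightarrow> S_Noetherian UNIV (pscale scale) (+) 0 UNIV ((\<lambda>s. [:s:]) ` S))
  \<and> (S_Noetherian UNIV (pscale scale) (+) 0 UNIV ((\<lambda>s. [:s:]) ` S)
       \<longleftrightarrow> S_Noetherian (loc_carrier (*) NN)
              (loc_act (pscale scale) NN) (loc_add (pscale scale) NN) (loc_zero (pscale scale) NN)
              (loc_carrier (pscale scale) NN)
              ((\<lambda>s. loc_cls (*) NN [:s:] 1) ` S))"
proof -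
  interpret poly_module scale
    unfolding poly_module_def by (rule assms(1))
  show ?thesis
  proof (intro conjI iffI)
    show "S_Noetherian UNIV ps (+) 0 UNIV ((\<lambda>s. [:s:]) ` S)"
      if "S_Noetherian UNIV scale (+) 0 UNIV S"
      using that assms(2,3) by (rule S_Noetherian_imp_S_Noetherian_poly)
    show "S_Noetherian UNIV scale (+) 0 UNIV S"
      if "S_Noetherian UNIV ps (+) 0 UNIV ((\<lambda>s. [:s:]) ` S)"
      using that by (rule S_Noetherian_poly_imp_S_Noetherian)
    show "S_Noetherian (loc_carrier (*) NN) (loc_act ps NN) (loc_add ps NN) (loc_zero ps NN)
        (loc_carrier ps NN) ((\<lambda>s. loc_cls (*) NN [:s:] 1) ` S)"
      if "S_Noetherian UNIV ps (+) 0 UNIV ((\<lambda>s. [:s:]) ` S)"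
      using that by (rule S_Noetherian_poly_imp_S_Noetherian_loc)
    show "S_Noetherian UNIV ps (+) 0 UNIV ((\<lambda>s. [:s:]) ` S)"
      if "S_Noetherian (loc_carrier (*) NN) (loc_act ps NN) (loc_add ps NN) (loc_zero ps NN)
        (loc_carrier ps NN) ((\<lambda>s. loc_cls (*) NN [:s:] 1) ` S)"
      using S_Noetherian_loc_imp_S_Noetherian[OF that] assms(2,3)
      by (rule S_Noetherian_imp_S_Noetherian_poly)
  qed
qed

end
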